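(* Let $x\in\mathbb{R}$ be irrational and suppose there are $\alpha\in(0,1)$ and a sequence of rational numbers $(p_j/q_j)_{j\ge1}$ (with $p_j\in\mathbb{Z}$, $q_j\in\mathbb{N}$) with $\lim_{j\to\infty}q_j=+\infty$ such that $\left|x-\frac{p_j}{q_j}\right|\le\alpha^{q_j}$ for each $j\in\mathbb{N}$. Let $r=e^{i2\pi x}$ and $\varphi_r(z)=rz$ for $z\in\mathbb{D}$. Then $1\in\sigma(C_{\varphi_r}, H_0(\mathbb{D}))$.
   Context: $\mathbb{D}$ is the open unit disc; $H_0(\mathbb{D})$ is the Fréchet space of analytic functions $f$ on $\mathbb{D}$ with $f(0)=0$, with the topology of uniform convergence on compact subsets; $C_{\varphi_r}f=f\circ\varphi_r$. For a continuous linear operator $T$ on a Fréchet space $X$, $\sigma(T;X)$ is the set of $\lambda\in\mathbb{C}$ such that $\lambda I-T$ is not a bijection with continuous inverse. *)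

theory Defs
  imports "HOL-Analysis.Analysis"
begin

text \<open>H_0(D): analytic functions on the open unit disc vanishing at 0.
  Functions are normalised to be 0 outside the disc, so that equality of
  elements of H0 is equality as functions on the disc.\<close>
definition H0 :: "(complex \<Rightarrow> complex) set" where
  "H0 = {f. f holomorphic_on ball 0 1 \<and> f 0 = 0 \<and> (\<forall>z. z \<notin> ball 0 1 \<longrightarrow> f z = 0)}"

definition H0_top :: "(complex \<Rightarrow> complex) topology" where
  "H0_top = topology (\<lambda>U. U \<subseteq> H0 \<and>
     (\<forall>f\<in>U. \<exists>K e. compact K \<and> K \<subseteq> ball 0 1 \<and> e > 0 \<and>
        {g\<in>H0. \<forall>z\<in>K. cmod (g z - f z) < e} \<subseteq> U))"

definition Cphi :: "complex \<Rightarrow> (complex \<Rightarrow> complex) \<Rightarrow> (complex \<Rightarrow> complex)" where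
  "Cphi r f = (\<lambda>z. if z \<in> ball 0 1 then f (r * z) else 0)"

definition H0_spectrum :: "((complex \<Rightarrow> complex) \<Rightarrow> (complex \<Rightarrow> complex)) \<Rightarrow> complex set" where
  "H0_spectrum T = {lam. \<not> (bij_betw (\<lambda>f z. lam * f z - T f z) H0 H0 \<and>
       continuous_map H0_top H0_top (inv_into H0 (\<lambda>f z. lam * f z - T f z)))}"

end

theory Submission
  imports Defs
begin

text \<open>If \<open>I - C\<^sub>\<phi>\<^sub>r\<close> had a continuous inverse \<open>S\<close> on \<open>H\<^sub>0\<close>, continuity of \<open>S\<close> at \<open>0\<close>
  followed by evaluation at a point \<open>0 < s < 1\<close> would give a compact \<open>K\<close> in the disc and
  \<open>e > 0\<close> with \<open>|S g(s)| < 1\<close> whenever \<open>|g| < e\<close> on \<open>K\<close>. The monomials are eigenvectors,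
  \<open>S (c z\<^sup>n) = c z\<^sup>n / (1 - r\<^sup>n)\<close>, so with \<open>c = e/2\<close> this forces \<open>c s\<^sup>n < |1 - r\<^sup>n|\<close>
  for every \<open>n \<ge> 1\<close>. But \<open>|1 - r\<^sup>n| \<le> 2\<pi> |n x - p|\<close>, which for \<open>n = q\<^sub>j\<close> is at most
  \<open>2\<pi> n \<alpha>\<^sup>n = o(s\<^sup>n)\<close> once \<open>\<alpha> < s < 1\<close>; irrationality of \<open>x\<close> guarantees \<open>r\<^sup>n \<noteq> 1\<close>.\<close>

definition H0_open :: "(complex \<Rightarrow> complex) set \<Rightarrow> bool" where
  "H0_open U \<longleftrightarrow> U \<subseteq> H0 \<and>
     (\<forall>f\<in>U. \<exists>K e. compact K \<and> K \<subseteq> ball 0 1 \<and> e > 0 \<and>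
        {g\<in>H0. \<forall>z\<in>K. cmod (g z - f z) < e} \<subseteq> U)"

lemma H0_openE:
  assumes "H0_open U" "f \<in> U"
  obtains K e where "compact K" "K \<subseteq> ball 0 1" "e > 0"
    "{g\<in>H0. \<forall>z\<in>K. cmod (g z - f z) < e} \<subseteq> U"
  using assms unfolding H0_open_def by blast

lemma istopology_H0_open: "istopology H0_open"
  unfolding istopology_def
proof (intro conjI allI impI)
  fix S T assume S: "H0_open S" and T: "H0_open T"
  show "H0_open (S \<inter> T)"
    unfolding H0_open_def
  proof (intro conjI ballI)
    show "S \<inter> T \<subseteq> H0"
      using S unfolding H0_open_def by blast
    fix f assume "f \<in> S \<inter> T"
    then have "f \<in> S" "f \<in> T"
      by simp_all
    obtain K1 e1 where K1: "compact K1" "K1 \<subseteq> ball 0 1" "e1 > 0"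
      and S_nbhd: "{g\<in>H0. \<forall>z\<in>K1. cmod (g z - f z) < e1} \<subseteq> S"
      by (rule H0_openE[OF S \<open>f \<in> S\<close>])
    obtain K2 e2 where K2: "compact K2" "K2 \<subseteq> ball 0 1" "e2 > 0"
      and T_nbhd: "{g\<in>H0. \<forall>z\<in>K2. cmod (g z - f z) < e2} \<subseteq> T"
      by (rule H0_openE[OF T \<open>f \<in> T\<close>])
    have "{g\<in>H0. \<forall>z\<in>K1 \<union> K2. cmod (g z - f z) < min e1 e2} \<subseteq> S \<inter> T"
      using S_nbhd T_nbhd by fastforce
    moreover have "compact (K1 \<union> K2)" "K1 \<union> K2 \<subseteq> ball 0 1" "min e1 e2 > 0"
      using K1 K2 by auto
    ultimately show "\<exists>K e. compact K \<and> K \<subseteq> ball 0 1 \<and> e > 0 \<and>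
        {g\<in>H0. \<forall>z\<in>K. cmod (g z - f z) < e} \<subseteq> S \<inter> T"
      by blast
  qed
next
  fix \<U> assume opens: "\<forall>U\<in>\<U>. H0_open U"
  show "H0_open (\<Union>\<U>)"
    unfolding H0_open_def
  proof (intro conjI ballI)
    show "\<Union>\<U> \<subseteq> H0"
      using opens unfolding H0_open_def by blast
    fix f assume "f \<in> \<Union>\<U>"
    then obtain U where "U \<in> \<U>" "f \<in> U"
      by blast
    then have "H0_open U"
      using opens by blast
    then obtain K e where "compact K" "K \<subseteq> ball 0 1" "e > 0"
      "{g\<in>H0. \<forall>z\<in>K. cmod (g z - f z) < e} \<subseteq> U"
      using \<open>f \<in> U\<close> by (rule H0_openE)
    then show "\<exists>K e. compact K \<and> K \<subseteq> ball 0 1 \<and> e > 0 \<and>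
        {g\<in>H0. \<forall>z\<in>K. cmod (g z - f z) < e} \<subseteq> \<Union>\<U>"
      using \<open>U \<in> \<U>\<close> by blast
  qed
qed

lemma openin_H0_top: "openin H0_top U \<longleftrightarrow> H0_open U"
proof -
  have "H0_top = topology H0_open"
    unfolding H0_top_def H0_open_def[abs_def] ..
  then show ?thesis
    using topology_inverse'[OF istopology_H0_open] by simp
qed

lemma topspace_H0_top: "topspace H0_top = H0"
proof -
  have "H0_open H0"
    unfolding H0_open_def by (intro conjI ballI exI[of _ "{0}"] exI[of _ 1]) auto
  then show ?thesis
    unfolding topspace_def openin_H0_top by (auto simp: H0_open_def)
qed

lemma H0_open_norm_eval_less:
  assumes "w \<in> ball 0 1"
  shows "H0_open {f\<in>H0. cmod (f w) < b}"
  unfolding H0_open_def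
proof (intro conjI ballI)
  fix f assume f: "f \<in> {f\<in>H0. cmod (f w) < b}"
  have "cmod (g w) < b" if "cmod (g w - f w) < b - cmod (f w)" for g
    using that norm_triangle_sub[of "g w" "f w"] by simp
  then show "\<exists>K e. compact K \<and> K \<subseteq> ball 0 1 \<and> e > 0 \<and>
      {g\<in>H0. \<forall>z\<in>K. cmod (g z - f z) < e} \<subseteq> {f\<in>H0. cmod (f w) < b}"
    using f assms by (intro exI[of _ "{w}"] exI[of _ "b - cmod (f w)"]) auto
qed auto

lemma continuous_map_H0_top_eval_bound:
  assumes "continuous_map H0_top H0_top S" "S (\<lambda>_. 0) = (\<lambda>_. 0)" "w \<in> ball 0 1"
  obtains K e where "compact K" "K \<subseteq> ball 0 1" "e > 0"
    "\<And>g. g \<in> H0 \<Longrightarrow> \<forall>z\<in>K. cmod (g z) < e \<Longrightarrow> cmod (S g w) < 1"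
proof -
  have "openin H0_top {f\<in>H0. cmod (f w) < 1}"
    using assms(3) by (simp add: openin_H0_top H0_open_norm_eval_less)
  then have "H0_open {f\<in>H0. S f \<in> {f\<in>H0. cmod (f w) < 1}}"
    using assms(1) unfolding continuous_map_def openin_H0_top topspace_H0_top by blast
  moreover have "(\<lambda>_. 0) \<in> {f\<in>H0. S f \<in> {f\<in>H0. cmod (f w) < 1}}"
    using assms(2) by (simp add: H0_def)
  ultimately obtain K e where "compact K" "K \<subseteq> ball 0 1" "e > 0"
    and nbhd: "{g\<in>H0. \<forall>z\<in>K. cmod (g z - 0) < e} \<subseteq> {f\<in>H0. S f \<in> {f\<in>H0. cmod (f w) < 1}}"
    by (rule H0_openE)
  then show thesis
    by (intro that[of K e]) auto
qed

definition disc_monomial :: "complex \<Rightarrow> nat \<Rightarrow> complex \<Rightarrow> complex" where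
  "disc_monomial c n = (\<lambda>z. if z \<in> ball 0 1 then c * z ^ n else 0)"

lemma disc_monomial_in_H0: "n \<ge> 1 \<Longrightarrow> disc_monomial c n \<in> H0"
  unfolding H0_def disc_monomial_def
  by (auto intro!: holomorphic_transform[of "\<lambda>z. c * z ^ n"] holomorphic_intros)

lemma Cphi_disc_monomial:
  assumes "norm r = 1"
  shows "Cphi r (disc_monomial c n) = disc_monomial (c * r ^ n) n"
proof -
  have "r * z \<in> ball 0 1" if "z \<in> ball 0 1" for z
    using assms that by (simp add: norm_mult)
  then show ?thesis
    unfolding Cphi_def disc_monomial_def by (auto simp: power_mult_distrib)
qed

lemma one_in_H0_spectrum_Cphi:
  assumes "norm r = 1" "0 < s" "s < 1"
    and close_to_one: "\<And>c. c > 0 \<Longrightarrow> \<exists>n\<ge>1. r ^ n \<noteq> 1 \<and> cmod (1 - r ^ n) < c * s ^ n"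
  shows "1 \<in> H0_spectrum (Cphi r)"
proof -
  define T where "T = (\<lambda>f z. 1 * f z - Cphi r f z)"
  have T_monomial: "T (disc_monomial c n) = disc_monomial (c * (1 - r ^ n)) n" for c n
    using Cphi_disc_monomial[OF assms(1)]
    by (auto simp: T_def disc_monomial_def algebra_simps)
  have False if bij: "bij_betw T H0 H0" and cont: "continuous_map H0_top H0_top (inv_into H0 T)"
  proof -
    define S where "S = inv_into H0 T"
    have S_T: "S (T f) = f" if "f \<in> H0" for f
      using bij that unfolding S_def by (simp add: bij_betw_imp_inj_on)
    have "S (\<lambda>_. 0) = (\<lambda>_. 0)"
      using S_T[of "\<lambda>_. 0"] by (simp add: T_def Cphi_def H0_def)
    moreover have s_in_disc: "complex_of_real s \<in> ball 0 1"
      using assms(2,3) by simp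
    ultimately obtain K e where K: "compact K" "K \<subseteq> ball 0 1" "e > 0"
      and bound: "\<And>g. g \<in> H0 \<Longrightarrow> \<forall>z\<in>K. cmod (g z) < e \<Longrightarrow> cmod (S g s) < 1"
      using continuous_map_H0_top_eval_bound[OF cont[folded S_def]] by blast
    define c where "c = e / 2"
    have "c > 0"
      using K(3) by (simp add: c_def)
    then obtain n where n: "n \<ge> 1" "r ^ n \<noteq> 1" "cmod (1 - r ^ n) < c * s ^ n"
      using close_to_one by blast
    define d where "d = 1 - r ^ n"
    have d: "d \<noteq> 0" "c * s ^ n / cmod d > 1"
      using n assms(2) by (auto simp: d_def)
    have "S (disc_monomial c n) = disc_monomial (c / d) n"
      using S_T[OF disc_monomial_in_H0[OF n(1)], of "c / d"] d(1)
      by (simp add: T_monomial d_def)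
    moreover have "cmod (disc_monomial c n z) < e" if "z \<in> K" for z
      using K that power_le_one[of "cmod z" n]
      by (auto simp: disc_monomial_def c_def norm_mult norm_power)
    ultimately have "cmod (disc_monomial (c / d) n s) < 1"
      using bound[OF disc_monomial_in_H0[OF n(1)]] by metis
    moreover have "cmod (disc_monomial (c / d) n s) = c * s ^ n / cmod d"
      using s_in_disc \<open>c > 0\<close> assms(2)
      by (simp add: disc_monomial_def norm_mult norm_divide norm_power)
    ultimately show False
      using d(2) by linarith
  qed
  then show ?thesis
    unfolding H0_spectrum_def T_def by blast
qed

lemma rotation_power_ne_one:
  assumes "x \<notin> \<rat>" "n \<ge> 1"
  shows "exp (\<i> * complex_of_real (2 * pi * x)) ^ n \<noteq> 1"
proof
  assume "exp (\<i> * complex_of_real (2 * pi * x)) ^ n = 1"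
  then obtain k :: int where "2 * pi * (real n * x) = of_int (2 * k) * pi"
    by (auto simp: exp_of_nat_mult[symmetric] exp_eq_1 algebra_simps)
  then have "x = of_int k / real n"
    using assms(2) by (simp add: field_simps)
  then show False
    using assms(1) by simp
qed

lemma norm_one_minus_rotation_power_le:
  "cmod (1 - exp (\<i> * complex_of_real (2 * pi * x)) ^ n) \<le> 2 * pi * \<bar>real n * x - of_int m\<bar>"
proof -
  define t where "t = real n * x - of_int m"
  have "exp (\<i> * complex_of_real (2 * pi * x)) ^ n
      = exp (\<i> * complex_of_real (2 * pi * t) + \<i> * (of_int m * (of_real pi * 2)))"
    unfolding exp_of_nat_mult[symmetric]
    by (rule arg_cong[where f = exp]) (simp add: t_def algebra_simps)
  also have "\<dots> = exp (\<i> * complex_of_real (2 * pi * t))"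
    by (rule exp_plus_2pin)
  finally have "cmod (1 - exp (\<i> * complex_of_real (2 * pi * x)) ^ n)
      = cmod (exp (\<i> * complex_of_real (2 * pi * t)) - 1)"
    by (metis norm_minus_commute)
  also have "\<dots> = 2 * \<bar>sin (2 * pi * t / 2)\<bar>"
    by (rule dist_exp_i_1)
  also have "\<dots> \<le> 2 * \<bar>2 * pi * t / 2\<bar>"
    using abs_sin_x_le_abs_x by simp
  finally show ?thesis
    by (simp add: t_def abs_mult)
qed

lemma rotation_powers_close_to_one:
  fixes x \<alpha> s :: real and p :: "nat \<Rightarrow> int" and q :: "nat \<Rightarrow> nat"
  assumes "0 < \<alpha>" "\<alpha> < s" "c > 0"
    and "\<forall>j\<ge>1. q j \<ge> 1"
    and "filterlim q at_top sequentially"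
    and "\<forall>j\<ge>1. \<bar>x - real_of_int (p j) / real (q j)\<bar> \<le> \<alpha> ^ q j"
  shows "\<exists>n\<ge>1. cmod (1 - exp (\<i> * complex_of_real (2 * pi * x)) ^ n) < c * s ^ n"
proof -
  define a where "a = \<alpha> / s"
  have "(\<lambda>n. of_nat n * a ^ n) \<longlonglongrightarrow> 0"
    using assms(1,2) by (intro powser_times_n_limit_0) (simp add: a_def)
  then have "(\<lambda>j. of_nat (q j) * a ^ q j) \<longlonglongrightarrow> 0"
    using filterlim_compose assms(5) by blast
  then have "eventually (\<lambda>j. of_nat (q j) * a ^ q j < c / (2 * pi)) sequentially"
    using assms(3) by (intro order_tendstoD(2)) auto
  then obtain N where N: "\<forall>j\<ge>N. real (q j) * a ^ q j < c / (2 * pi)"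
    unfolding eventually_sequentially by blast
  define j where "j = max N 1"
  have "j \<ge> N" "j \<ge> 1"
    by (simp_all add: j_def)
  define n where "n = q j"
  have n: "n \<ge> 1" "\<bar>x - of_int (p j) / real n\<bar> \<le> \<alpha> ^ n"
    using assms(4,6) \<open>j \<ge> 1\<close> by (simp_all add: n_def)
  have "real n * a ^ n < c / (2 * pi)"
    using N \<open>j \<ge> N\<close> by (simp add: n_def)
  then have n_a_small: "2 * pi * (real n * a ^ n) < c"
    by (simp add: field_simps)
  have "cmod (1 - exp (\<i> * complex_of_real (2 * pi * x)) ^ n) \<le> 2 * pi * \<bar>real n * x - of_int (p j)\<bar>"
    by (rule norm_one_minus_rotation_power_le)
  also have "real n * x - of_int (p j) = real n * (x - of_int (p j) / real n)"
    using n(1) by (simp add: field_simps)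
  also have "2 * pi * \<bar>real n * (x - of_int (p j) / real n)\<bar> \<le> 2 * pi * (real n * \<alpha> ^ n)"
    using n(2) by (simp add: abs_mult mult_left_mono)
  also have "\<dots> = 2 * pi * (real n * a ^ n) * s ^ n"
    using assms(1,2) by (simp add: a_def power_divide)
  also have "\<dots> < c * s ^ n"
    using n_a_small assms(1,2) by (intro mult_strict_right_mono) auto
  finally show ?thesis
    using n(1) by blast
qed

theorem mainTheorem4:
  fixes x :: real and \<alpha> :: real and p :: "nat \<Rightarrow> int" and q :: "nat \<Rightarrow> nat"
  assumes "x \<notin> \<rat>"
    and "0 < \<alpha>" and "\<alpha> < 1"
    and "\<forall>j\<ge>1. q j \<ge> 1"
    and "filterlim q at_top sequentially"
    and "\<forall>j\<ge>1. \<bar>x - real_of_int (p j) / real (q j)\<bar> \<le> \<alpha> ^ q j"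
  shows "1 \<in> H0_spectrum (Cphi (exp (\<i> * complex_of_real (2 * pi * x))))"
proof (rule one_in_H0_spectrum_Cphi)
  define s where "s = (1 + \<alpha>) / 2"
  show "0 < s" "s < 1"
    using assms(2,3) by (simp_all add: s_def)
  have "\<alpha> < s"
    using assms(3) by (simp add: s_def)
  show "\<exists>n\<ge>1. exp (\<i> * complex_of_real (2 * pi * x)) ^ n \<noteq> 1 \<and>
      cmod (1 - exp (\<i> * complex_of_real (2 * pi * x)) ^ n) < c * s ^ n" if "c > 0" for c
    using rotation_powers_close_to_one[OF assms(2) \<open>\<alpha> < s\<close> that assms(4-6)]
      rotation_power_ne_one[OF assms(1)] by blast
qed simp

end
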